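(* Let $(X,d)$ be a compact metric space with $\dim X=0$ and let $f\in\mathcal{H}(X)$ be equicontinuous. Then $\lim_{\delta\to0}r(\delta)=0$.
   Context: $f$ is equicontinuous if for every $\epsilon>0$ there is $\eta>0$ such that $d(x,y)\le\eta$ implies $\sup_{i\in\mathbb{Z}}d(f^i(x),f^i(y))\le\epsilon$; such $f$ satisfies $X=CR(f)$ (every point is chain recurrent). A $\delta$-chain is a finite sequence $(x_i)_{i=0}^k$, $k\ge1$, with $d(f(x_i),x_{i+1})\le\delta$; a $\delta$-cycle is a $\delta$-chain with $x_0=x_k$, of length $k$. For $f$ with $X=CR(f)$ and $\delta>0$: $x\sim_\delta y$ iff there are $\delta$-chains from $x$ to $y$ and from $y$ to $x$; this is an equivalence relation whose classes ($\delta$-chain components) are finitely many, clopen and $f$-invariant. For a $\delta$-chain component $C$, let $m$ be the gcd of the lengths of all $\delta$-cycles lying in $C$; define $x\sim_{\delta,m}y$ for $x,y\in C$ iff there is a $\delta$-chain from $x$ to $y$ whose length is divisible by $m$. This is an equivalence relation on $C$ with exactly $m$ classes (the $\delta$-cyclic components of $C$), each clopen. $r(\delta)$ denotes the maximum of the diameters of all $\delta$-cyclic components of all $\delta$-chain components of $X$. *)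

theory Defs
  imports "HOL-Analysis.Analysis"
begin

definition zpow :: "'a set \<Rightarrow> ('a \<Rightarrow> 'a) \<Rightarrow> int \<Rightarrow> 'a \<Rightarrow> 'a" where
  "zpow X f i = (if 0 \<le> i then f ^^ nat i else (inv_into X f) ^^ nat (- i))"

definition is_homeo :: "'a::topological_space set \<Rightarrow> ('a \<Rightarrow> 'a) \<Rightarrow> bool" where
  "is_homeo X f \<longleftrightarrow> (\<exists>g. homeomorphism X X f g)"

definition equicontinuous :: "'a::metric_space set \<Rightarrow> ('a \<Rightarrow> 'a) \<Rightarrow> bool" where
  "equicontinuous X f \<longleftrightarrow>
     (\<forall>\<epsilon>>0. \<exists>\<eta>>0. \<forall>x\<in>X. \<forall>y\<in>X. dist x y \<le> \<eta> \<longrightarrow>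
        (\<forall>i::int. dist (zpow X f i x) (zpow X f i y) \<le> \<epsilon>))"

text \<open>Topological dimension zero (small inductive dimension 0): X nonempty and every
  point has arbitrarily small neighbourhoods that are clopen in X.\<close>
definition zero_dim :: "'a::topological_space set \<Rightarrow> bool" where
  "zero_dim X \<longleftrightarrow> X \<noteq> {} \<and>
     (\<forall>x\<in>X. \<forall>U. open U \<and> x \<in> U \<longrightarrow>
        (\<exists>V. openin (top_of_set X) V \<and> closedin (top_of_set X) V \<and> x \<in> V \<and> V \<subseteq> U))"

definition dchain :: "'a::metric_space set \<Rightarrow> ('a \<Rightarrow> 'a) \<Rightarrow> real \<Rightarrow> (nat \<Rightarrow> 'a) \<Rightarrow> nat \<Rightarrow> bool" where
  "dchain X f \<delta> c k \<longleftrightarrow> 1 \<le> k \<and> (\<forall>i\<le>k. c i \<in> X) \<and>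
     (\<forall>i<k. dist (f (c i)) (c (Suc i)) \<le> \<delta>)"

definition chain_from_to :: "'a::metric_space set \<Rightarrow> ('a \<Rightarrow> 'a) \<Rightarrow> real \<Rightarrow> 'a \<Rightarrow> 'a \<Rightarrow> nat \<Rightarrow> bool" where
  "chain_from_to X f \<delta> x y k \<longleftrightarrow> (\<exists>c. dchain X f \<delta> c k \<and> c 0 = x \<and> c k = y)"

definition chain_equiv :: "'a::metric_space set \<Rightarrow> ('a \<Rightarrow> 'a) \<Rightarrow> real \<Rightarrow> 'a \<Rightarrow> 'a \<Rightarrow> bool" where
  "chain_equiv X f \<delta> x y \<longleftrightarrow> (\<exists>k. chain_from_to X f \<delta> x y k) \<and> (\<exists>k. chain_from_to X f \<delta> y x k)"

definition chain_components :: "'a::metric_space set \<Rightarrow> ('a \<Rightarrow> 'a) \<Rightarrow> real \<Rightarrow> 'a set set" where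
  "chain_components X f \<delta> = {{y\<in>X. chain_equiv X f \<delta> x y} | x. x \<in> X}"

definition cycle_period :: "'a::metric_space set \<Rightarrow> ('a \<Rightarrow> 'a) \<Rightarrow> real \<Rightarrow> 'a set \<Rightarrow> nat" where
  "cycle_period X f \<delta> C =
     Gcd {k. \<exists>c. dchain X f \<delta> c k \<and> c 0 = c k \<and> (\<forall>i\<le>k. c i \<in> C)}"

definition cyclic_components :: "'a::metric_space set \<Rightarrow> ('a \<Rightarrow> 'a) \<Rightarrow> real \<Rightarrow> 'a set \<Rightarrow> 'a set set" where
  "cyclic_components X f \<delta> C =
     {{y\<in>C. \<exists>k. cycle_period X f \<delta> C dvd k \<and> chain_from_to X f \<delta> x y k} | x. x \<in> C}"

text \<open>r(delta): maximum of the diameters of all delta-cyclic components of all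
  delta-chain components (a finite set under the standing hypotheses).\<close>
definition r_fun :: "'a::metric_space set \<Rightarrow> ('a \<Rightarrow> 'a) \<Rightarrow> real \<Rightarrow> real" where
  "r_fun X f \<delta> = Max {diameter D | D C. C \<in> chain_components X f \<delta> \<and> D \<in> cyclic_components X f \<delta> C}"

end

theory Submission
  imports Defs
begin

text \<open>Fix \<open>\<epsilon> > 0\<close>. Zero-dimensionality gives a finite cover of \<open>X\<close> by clopen sets of diameter
  at most \<open>\<epsilon>\<close>; call \<open>x\<close> and \<open>y\<close> equivalent if their two-sided orbits visit the same cover
  elements at all times. This relation \<open>R\<close> is \<open>f\<close>-invariant, its classes have diameter at most
  \<open>\<epsilon>\<close>, and by equicontinuity it relates all pairs closer than some \<open>\<eta> > 0\<close>.
  For \<open>\<delta> \<le> \<eta>\<close> a \<open>\<delta>\<close>-chain of length \<open>k\<close> from \<open>x\<close> ends \<open>R\<close>-related to \<open>f\<^sup>k x\<close>. The set of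
  \<open>k\<close> with \<open>f\<^sup>k x R x\<close> is closed under sums and differences and contains the length of every
  \<open>\<delta>\<close>-cycle in the chain component of \<open>x\<close>, hence every multiple of the period \<open>m\<close>. So each
  \<open>\<delta>\<close>-cyclic component lies in one \<open>R\<close>-class and \<open>r(\<delta>) \<le> \<epsilon>\<close>.
  That the maximum defining \<open>r(\<delta>)\<close> is taken over a finite set follows from the same
  construction with \<open>\<epsilon> = \<delta>\<close>: then \<open>R\<close>-related points are \<open>\<delta>\<close>-chain equivalent, so every cyclic
  component is a union of the finitely many \<open>R\<close>-classes.\<close>

section \<open>Chains\<close>

lemma chain_from_to_trans:
  assumes "chain_from_to X f \<delta> x y k" "chain_from_to X f \<delta> y z l"
  shows "chain_from_to X f \<delta> x z (k + l)"
proof -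
  obtain c where c: "dchain X f \<delta> c k" "c 0 = x" "c k = y"
    using assms(1) unfolding chain_from_to_def by blast
  obtain d where d: "dchain X f \<delta> d l" "d 0 = y" "d l = z"
    using assms(2) unfolding chain_from_to_def by blast
  define cd where "cd i = (if i \<le> k then c i else d (i - k))" for i
  have "dist (f (cd i)) (cd (Suc i)) \<le> \<delta>" if "i < k + l" for i
  proof (cases "i < k")
    case True
    then show ?thesis using c unfolding dchain_def cd_def by (auto simp: Suc_le_eq)
  next
    case False
    then have "Suc i - k = Suc (i - k)" "i - k < l" using that by auto
    then show ?thesis using False c(3) d unfolding dchain_def cd_def by auto
  qed
  then have "dchain X f \<delta> cd (k + l)"
    using c(1) d(1) unfolding dchain_def cd_def by auto
  then show ?thesis
    unfolding chain_from_to_def using c d cd_def by (intro exI[of _ cd]) auto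
qed

lemma dchain_prefix:
  "dchain X f \<delta> c k \<Longrightarrow> 1 \<le> i \<Longrightarrow> i \<le> k \<Longrightarrow> dchain X f \<delta> c i"
  unfolding dchain_def by auto

lemma dchain_suffix:
  "dchain X f \<delta> c k \<Longrightarrow> i < k \<Longrightarrow> dchain X f \<delta> (\<lambda>j. c (i + j)) (k - i)"
  unfolding dchain_def by auto

lemma chain_from_to_orbit:
  assumes "\<And>x. x \<in> X \<Longrightarrow> f x \<in> X" and "y \<in> X" "y' \<in> X" "1 \<le> p" "0 \<le> \<delta>"
    and "dist ((f ^^ p) y) y' \<le> \<delta>"
  shows "chain_from_to X f \<delta> y y' p"
proof -
  define c where "c i = (if i < p then (f ^^ i) y else y')" for i
  have "(f ^^ i) y \<in> X" for i
    using assms(1,2) by (induction i) auto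
  moreover have "dist (f (c i)) (c (Suc i)) \<le> \<delta>" if "i < p" for i
  proof (cases "Suc i < p")
    case True
    then show ?thesis using that assms(5) by (simp add: c_def)
  next
    case False
    then have "p = Suc i" using that by simp
    then show ?thesis using that assms(6) by (simp add: c_def)
  qed
  ultimately have "dchain X f \<delta> c p"
    using assms(3,4) unfolding dchain_def by (auto simp: c_def)
  moreover have "c 0 = y" "c p = y'"
    using assms(4) by (auto simp: c_def)
  ultimately show ?thesis
    unfolding chain_from_to_def by blast
qed

lemma chain_equiv_sym: "chain_equiv X f \<delta> x y \<Longrightarrow> chain_equiv X f \<delta> y x"
  unfolding chain_equiv_def by blast

lemma chain_equiv_trans:
  "chain_equiv X f \<delta> x y \<Longrightarrow> chain_equiv X f \<delta> y z \<Longrightarrow> chain_equiv X f \<delta> x z"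
  unfolding chain_equiv_def using chain_from_to_trans by metis

lemma chain_equiv_cycle_point:
  assumes c: "dchain X f \<delta> c k" "c 0 = c k" and i: "i \<le> k"
  shows "chain_equiv X f \<delta> (c 0) (c i)"
proof (cases "i = 0 \<or> i = k")
  case True
  have "chain_from_to X f \<delta> (c 0) (c 0) k"
    using c unfolding chain_from_to_def by metis
  then show ?thesis
    using True c(2) unfolding chain_equiv_def by auto
next
  case False
  then have "chain_from_to X f \<delta> (c 0) (c i) i"
    using dchain_prefix[OF c(1), of i] i unfolding chain_from_to_def by auto
  moreover have "chain_from_to X f \<delta> (c i) (c 0) (k - i)"
    using dchain_suffix[OF c(1), of i] False i c(2)
    unfolding chain_from_to_def by (intro exI[of _ "\<lambda>j. c (i + j)"]) auto
  ultimately show ?thesis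
    unfolding chain_equiv_def by blast
qed

lemma chain_components_subset: "C \<in> chain_components X f \<delta> \<Longrightarrow> C \<subseteq> X"
  unfolding chain_components_def by blast

lemma chain_component_equiv:
  assumes "C \<in> chain_components X f \<delta>" "x \<in> C" "y \<in> C"
  shows "chain_equiv X f \<delta> x y"
  using assms chain_equiv_sym chain_equiv_trans unfolding chain_components_def by blast

lemma cyclic_components_subset: "D \<in> cyclic_components X f \<delta> C \<Longrightarrow> D \<subseteq> C"
  unfolding cyclic_components_def by blast

text \<open>A set of naturals closed under sums and differences consists of the multiples of its
  least positive element.\<close>
lemma Gcd_dvd_imp_mem:
  fixes K S :: "nat set"
  assumes K0: "0 \<in> K" and Kadd: "\<And>a b. a \<in> K \<Longrightarrow> b \<in> K \<Longrightarrow> a + b \<in> K"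
    and Kdiff: "\<And>a b. a \<in> K \<Longrightarrow> b \<in> K \<Longrightarrow> b \<le> a \<Longrightarrow> a - b \<in> K"
    and SK: "S \<subseteq> K" and dvd: "Gcd S dvd k"
  shows "k \<in> K"
proof (cases "\<exists>q\<in>K. q > 0")
  case False
  then have "S \<subseteq> {0}"
    using SK by auto
  then have "k = 0"
    using dvd by (metis Gcd_0_iff dvd_0_left_iff)
  then show ?thesis
    using K0 by simp
next
  case True
  define p where "p = (LEAST q. q \<in> K \<and> q > 0)"
  have p: "p \<in> K" "p > 0"
    using LeastI_ex[of "\<lambda>q. q \<in> K \<and> q > 0"] True unfolding p_def by auto
  have p_least: "q \<in> K \<Longrightarrow> q > 0 \<Longrightarrow> p \<le> q" for q
    unfolding p_def by (simp add: Least_le)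
  have mult: "p * n \<in> K" for n
    by (induction n) (auto simp: K0 Kadd p(1))
  have "p dvd q" if "q \<in> K" for q
  proof -
    have "q - p * (q div p) \<in> K"
      using Kdiff[OF that mult times_div_less_eq_dividend] .
    then have "q mod p \<in> K"
      by (metis minus_mult_div_eq_mod)
    then have "q mod p = 0"
      using p_least[of "q mod p"] p(2) by (metis mod_less_divisor not_gr_zero not_le)
    then show ?thesis by auto
  qed
  then have "p dvd k"
    using SK dvd by (meson Gcd_greatest dvd_trans subsetD)
  then show ?thesis
    using mult by (metis dvdE)
qed

section \<open>Small clopen covers and itineraries\<close>

lemma zero_dim_small_clopen_cover:
  fixes X :: "'a::metric_space set"
  assumes "compact X" "zero_dim X" "0 < e"
  obtains \<V> where "finite \<V>" "X \<subseteq> \<Union>\<V>"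
    "\<And>V. V \<in> \<V> \<Longrightarrow> openin (top_of_set X) V \<and> closedin (top_of_set X) V"
    "\<And>V a b. V \<in> \<V> \<Longrightarrow> a \<in> V \<Longrightarrow> b \<in> V \<Longrightarrow> dist a b \<le> e"
proof -
  let ?C = "{V. openin (top_of_set X) V \<and> closedin (top_of_set X) V \<and>
                (\<forall>a\<in>V. \<forall>b\<in>V. dist a b \<le> e)}"
  have "x \<in> \<Union>?C" if "x \<in> X" for x
  proof -
    have "open (ball x (e/2))" "x \<in> ball x (e/2)"
      using assms(3) by auto
    then obtain V where V: "openin (top_of_set X) V" "closedin (top_of_set X) V" "x \<in> V"
      "V \<subseteq> ball x (e/2)"
      using assms(2) \<open>x \<in> X\<close> unfolding zero_dim_def by blast
    have "dist a b \<le> e" if "a \<in> V" "b \<in> V" for a b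
    proof -
      have "dist x a < e/2" "dist x b < e/2"
        using V(4) that by auto
      then show ?thesis
        using dist_triangle[of a b x] by (simp add: dist_commute)
    qed
    then show ?thesis
      using V by blast
  qed
  then have cover: "X \<subseteq> \<Union>?C"
    by blast
  have "\<forall>V\<in>?C. openin (top_of_set X) V"
    by blast
  then have "\<exists>\<V>\<subseteq>?C. finite \<V> \<and> X \<subseteq> \<Union>\<V>"
    using compact_eq_openin_cover[THEN iffD1, OF assms(1), rule_format, OF conjI] cover by blast
  then obtain \<V> where "\<V> \<subseteq> ?C" "finite \<V>" "X \<subseteq> \<Union>\<V>"
    by (elim exE conjE)
  then show thesis
    by (intro that) auto
qed

lemma clopen_separation:
  fixes X :: "'a::metric_space set"
  assumes "compact X" "openin (top_of_set X) V" "closedin (top_of_set X) V"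
  obtains \<rho> where "0 < \<rho>" "\<And>a b. a \<in> X \<Longrightarrow> b \<in> X \<Longrightarrow> dist a b < \<rho> \<Longrightarrow> a \<in> V \<longleftrightarrow> b \<in> V"
proof -
  obtain W K where W: "open W" "V = X \<inter> W" and K: "closed K" "V = X \<inter> K"
    using assms(2,3) unfolding openin_open closedin_closed by blast
  have cover: "X \<subseteq> \<Union>{W, - K}"
    using W K by auto
  have "open G" if "G \<in> {W, - K}" for G
    using that W(1) K(1) by auto
  then obtain \<rho> where \<rho>: "0 < \<rho>" "\<And>x. x \<in> X \<Longrightarrow> \<exists>G\<in>{W, - K}. ball x \<rho> \<subseteq> G"
    using Heine_Borel_lemma[OF assms(1) cover] by blast
  have "a \<in> V \<longleftrightarrow> b \<in> V" if "a \<in> X" "b \<in> X" "dist a b < \<rho>" for a b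
  proof -
    have "a \<in> ball a \<rho>" "b \<in> ball a \<rho>"
      using \<rho>(1) that(3) by auto
    then show ?thesis
      using \<rho>(2)[OF \<open>a \<in> X\<close>] W K that(1,2) by blast
  qed
  then show thesis
    using that \<rho>(1) by blast
qed

lemma finite_clopen_separation:
  fixes X :: "'a::metric_space set"
  assumes "compact X" "finite \<V>"
    and "\<And>V. V \<in> \<V> \<Longrightarrow> openin (top_of_set X) V \<and> closedin (top_of_set X) V"
  obtains \<rho> where "0 < \<rho>"
    "\<And>a b. a \<in> X \<Longrightarrow> b \<in> X \<Longrightarrow> dist a b < \<rho> \<Longrightarrow> \<forall>V\<in>\<V>. a \<in> V \<longleftrightarrow> b \<in> V"
proof -
  define separates where
    "separates V \<rho> \<longleftrightarrow> (\<forall>a\<in>X. \<forall>b\<in>X. dist a b < \<rho> \<longrightarrow> (a \<in> V \<longleftrightarrow> b \<in> V))" for V \<rho>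
  have "eventually (\<lambda>\<rho>. separates V \<rho>) (at_right 0)" if "V \<in> \<V>" for V
  proof -
    have "openin (top_of_set X) V" "closedin (top_of_set X) V"
      using assms(3)[OF that] by blast+
    then obtain \<rho> where "0 < \<rho>" "separates V \<rho>"
      using clopen_separation[OF assms(1)] unfolding separates_def by metis
    have "separates V r" if "r < \<rho>" for r
      using that \<open>separates V \<rho>\<close> unfolding separates_def by (meson order.strict_trans)
    then show ?thesis
      unfolding eventually_at_right_field using \<open>0 < \<rho>\<close> by (intro exI[of _ \<rho>]) simp
  qed
  then have "eventually (\<lambda>\<rho>. \<forall>V\<in>\<V>. separates V \<rho>) (at_right 0)"
    by (intro eventually_ball_finite[OF assms(2)] ballI)
  then obtain b :: real where "0 < b" "\<forall>\<rho>>0. \<rho> < b \<longrightarrow> (\<forall>V\<in>\<V>. separates V \<rho>)"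
    unfolding eventually_at_right_field by blast
  then have "0 < b/2" "\<forall>V\<in>\<V>. separates V (b/2)"
    by auto
  then show thesis
    using that unfolding separates_def by blast
qed

lemma homeomorphism_self_inv_into:
  assumes "homeomorphism X X f g" "x \<in> X"
  shows "f x \<in> X" "inv_into X f x \<in> X" "inv_into X f (f x) = x"
proof -
  have onto: "f ` X = X"
    using homeomorphism_image1[OF assms(1)] .
  have "inj_on f X"
    using homeomorphism_apply1[OF assms(1)] by (rule inj_on_inverseI)
  then show "inv_into X f (f x) = x"
    using assms(2) by (rule inv_into_f_f)
  show "f x \<in> X" "inv_into X f x \<in> X"
    using onto assms(2) inv_into_into[of x f X] by auto
qed

lemma zpow_in:
  assumes "homeomorphism X X f g" "x \<in> X"
  shows "zpow X f i x \<in> X"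
proof -
  have "(h ^^ n) x \<in> X" if "\<And>x. x \<in> X \<Longrightarrow> h x \<in> X" for h n
    using that assms(2) by (induction n) auto
  then show ?thesis
    unfolding zpow_def using homeomorphism_self_inv_into[OF assms(1)] by auto
qed

lemma zpow_f_shift:
  assumes "homeomorphism X X f g" "x \<in> X"
  shows "zpow X f i (f x) = zpow X f (i + 1) x"
proof (cases "0 \<le> i")
  case True
  then have "nat (i + 1) = Suc (nat i)" by simp
  then show ?thesis
    using True by (simp add: zpow_def funpow_Suc_right del: funpow.simps)
next
  case False
  define n where "n = nat (- i - 1)"
  have i: "i = - int (Suc n)"
    using False unfolding n_def by simp
  then have "nat (- i) = Suc n" "nat (- (i + 1)) = n" by auto
  then show ?thesis
    using i homeomorphism_self_inv_into(3)[OF assms]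
    by (simp add: zpow_def funpow_Suc_right del: funpow.simps)
qed

definition same_itinerary :: "'a set \<Rightarrow> ('a \<Rightarrow> 'a) \<Rightarrow> 'a set set \<Rightarrow> 'a \<Rightarrow> 'a \<Rightarrow> bool" where
  "same_itinerary X f \<V> x y \<longleftrightarrow> x \<in> X \<and> y \<in> X \<and>
     (\<forall>i. \<forall>V\<in>\<V>. zpow X f i x \<in> V \<longleftrightarrow> zpow X f i y \<in> V)"

lemma same_itinerary_image_iff:
  assumes "homeomorphism X X f g" "x \<in> X" "y \<in> X"
  shows "same_itinerary X f \<V> (f x) (f y) \<longleftrightarrow> same_itinerary X f \<V> x y"
proof -
  have shift: "(\<forall>i::int. P (i + 1)) \<longleftrightarrow> (\<forall>i. P i)" for P
    by (metis diff_add_cancel)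
  show ?thesis
    unfolding same_itinerary_def
    using assms homeomorphism_self_inv_into(1)[OF assms(1)] zpow_f_shift[OF assms(1)]
      shift[of "\<lambda>i. \<forall>V\<in>\<V>. zpow X f i x \<in> V \<longleftrightarrow> zpow X f i y \<in> V"]
    by simp
qed

lemma same_itinerary_dist_le:
  assumes "X \<subseteq> \<Union>\<V>" "\<And>V a b. V \<in> \<V> \<Longrightarrow> a \<in> V \<Longrightarrow> b \<in> V \<Longrightarrow> dist a b \<le> e"
    and "same_itinerary X f \<V> x y"
  shows "dist x y \<le> e"
proof -
  have "x \<in> X" "\<forall>V\<in>\<V>. zpow X f 0 x \<in> V \<longleftrightarrow> zpow X f 0 y \<in> V"
    using assms(3) unfolding same_itinerary_def by blast+
  then have "x \<in> X" and same: "\<forall>V\<in>\<V>. x \<in> V \<longleftrightarrow> y \<in> V"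
    by (simp_all add: zpow_def)
  then obtain V where "V \<in> \<V>" "x \<in> V"
    using assms(1) by blast
  then show ?thesis
    using assms(2) same by blast
qed

lemma same_itinerary_if_orbits_close:
  assumes "homeomorphism X X f g"
    and "\<And>a b. a \<in> X \<Longrightarrow> b \<in> X \<Longrightarrow> dist a b < \<rho> \<Longrightarrow> \<forall>V\<in>\<V>. a \<in> V \<longleftrightarrow> b \<in> V"
    and "\<And>i. dist (zpow X f i x) (zpow X f i y) < \<rho>" and "x \<in> X" "y \<in> X"
  shows "same_itinerary X f \<V> x y"
  unfolding same_itinerary_def
  using assms(2)[OF zpow_in[OF assms(1,4)] zpow_in[OF assms(1,5)] assms(3)] assms(4,5) by blast

section \<open>Invariant partitions into small classes\<close>

locale invariant_partition =
  fixes X :: "'a::metric_space set" and f :: "'a \<Rightarrow> 'a" and R :: "'a \<Rightarrow> 'a \<Rightarrow> bool"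
    and \<epsilon> \<eta> :: real
  assumes compact: "compact X"
    and maps_into: "x \<in> X \<Longrightarrow> f x \<in> X"
    and related_in: "R x y \<Longrightarrow> x \<in> X \<and> y \<in> X"
    and refl: "x \<in> X \<Longrightarrow> R x x"
    and sym: "R x y \<Longrightarrow> R y x"
    and trans: "R x y \<Longrightarrow> R y z \<Longrightarrow> R x z"
    and small: "R x y \<Longrightarrow> dist x y \<le> \<epsilon>"
    and pos: "0 < \<eta>"
    and near: "x \<in> X \<Longrightarrow> y \<in> X \<Longrightarrow> dist x y \<le> \<eta> \<Longrightarrow> R x y"
    and invariant: "x \<in> X \<Longrightarrow> y \<in> X \<Longrightarrow> R (f x) (f y) \<longleftrightarrow> R x y"

lemma ex_invariant_partition:
  fixes X :: "'a::metric_space set"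
  assumes "compact X" "zero_dim X" "homeomorphism X X f g" "equicontinuous X f" "0 < \<epsilon>"
  obtains R \<eta> where "invariant_partition X f R \<epsilon> \<eta>"
proof -
  obtain \<V> where \<V>: "finite \<V>" "X \<subseteq> \<Union>\<V>"
    "\<And>V. V \<in> \<V> \<Longrightarrow> openin (top_of_set X) V \<and> closedin (top_of_set X) V"
    "\<And>V a b. V \<in> \<V> \<Longrightarrow> a \<in> V \<Longrightarrow> b \<in> V \<Longrightarrow> dist a b \<le> \<epsilon>"
    using zero_dim_small_clopen_cover[OF assms(1,2,5)] by blast
  obtain \<rho> where \<rho>: "0 < \<rho>"
    "\<And>a b. a \<in> X \<Longrightarrow> b \<in> X \<Longrightarrow> dist a b < \<rho> \<Longrightarrow> \<forall>V\<in>\<V>. a \<in> V \<longleftrightarrow> b \<in> V"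
    using finite_clopen_separation[OF assms(1) \<V>(1,3)] by blast
  obtain \<eta> where \<eta>: "0 < \<eta>"
    "\<And>x y i. x \<in> X \<Longrightarrow> y \<in> X \<Longrightarrow> dist x y \<le> \<eta> \<Longrightarrow> dist (zpow X f i x) (zpow X f i y) \<le> \<rho>/2"
    using assms(4) \<rho>(1) unfolding equicontinuous_def by (meson half_gt_zero)
  have "invariant_partition X f (same_itinerary X f \<V>) \<epsilon> \<eta>"
  proof
    show "compact X" "0 < \<eta>"
      by fact+
    show "f x \<in> X" if "x \<in> X" for x
      using homeomorphism_self_inv_into(1)[OF assms(3) that] .
    show "x \<in> X \<and> y \<in> X" if "same_itinerary X f \<V> x y" for x y
      using that unfolding same_itinerary_def by blast
    show "same_itinerary X f \<V> x x" if "x \<in> X" for x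
      using that unfolding same_itinerary_def by blast
    show "same_itinerary X f \<V> y x" if "same_itinerary X f \<V> x y" for x y
      using that unfolding same_itinerary_def by blast
    show "same_itinerary X f \<V> x z"
      if "same_itinerary X f \<V> x y" "same_itinerary X f \<V> y z" for x y z
      using that unfolding same_itinerary_def by blast
    show "dist x y \<le> \<epsilon>" if "same_itinerary X f \<V> x y" for x y
      using same_itinerary_dist_le[OF \<V>(2,4) that] .
    show "same_itinerary X f \<V> x y" if "x \<in> X" "y \<in> X" "dist x y \<le> \<eta>" for x y
    proof (rule same_itinerary_if_orbits_close[OF assms(3) \<rho>(2) _ that(1,2)])
      show "dist (zpow X f i x) (zpow X f i y) < \<rho>" for i
        using \<eta>(2)[OF that, of i] \<rho>(1) by linarith
    qed
    show "same_itinerary X f \<V> (f x) (f y) \<longleftrightarrow> same_itinerary X f \<V> x y"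
      if "x \<in> X" "y \<in> X" for x y
      using same_itinerary_image_iff[OF assms(3) that] .
  qed
  then show thesis
    by (rule that)
qed

definition saturated :: "'a set \<Rightarrow> ('a \<Rightarrow> 'a \<Rightarrow> bool) \<Rightarrow> 'a set \<Rightarrow> bool" where
  "saturated X R D \<longleftrightarrow> D \<subseteq> X \<and> (\<forall>y\<in>D. \<forall>y'. R y y' \<longrightarrow> y' \<in> D)"

lemma funpow_apply_add: "(f ^^ m) ((f ^^ n) x) = (f ^^ (m + n)) x"
  by (simp add: funpow_add)

context invariant_partition
begin

lemma related_in1: "R x y \<Longrightarrow> x \<in> X"
  using related_in by blast

lemma related_in2: "R x y \<Longrightarrow> y \<in> X"
  using related_in by blast

lemma funpow_in: "x \<in> X \<Longrightarrow> (f ^^ n) x \<in> X"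
  by (induction n) (auto intro: maps_into)

lemma funpow_invariant: "x \<in> X \<Longrightarrow> y \<in> X \<Longrightarrow> R ((f ^^ n) x) ((f ^^ n) y) \<longleftrightarrow> R x y"
  by (induction n) (simp_all add: invariant funpow_in)

lemma funpow_related: "R x y \<Longrightarrow> R ((f ^^ n) x) ((f ^^ n) y)"
  using funpow_invariant related_in1 related_in2 by blast

lemma dchain_tracks_orbit:
  assumes "\<delta> \<le> \<eta>" "dchain X f \<delta> c k" "i \<le> k"
  shows "R (c i) ((f ^^ i) (c 0))"
  using assms(3)
proof (induction i)
  case 0
  then show ?case
    using assms(2) refl unfolding dchain_def by simp
next
  case (Suc i)
  have c: "c i \<in> X" "c (Suc i) \<in> X" "dist (f (c i)) (c (Suc i)) \<le> \<delta>"
    using assms(2) Suc.prems unfolding dchain_def by auto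
  have "R (f (c i)) (c (Suc i))"
    using near[OF maps_into[OF c(1)] c(2)] c(3) assms(1) by simp
  moreover have "R (f (c i)) (f ((f ^^ i) (c 0)))"
    using funpow_related[OF Suc.IH, of 1] Suc.prems by simp
  ultimately show ?case
    using sym trans by (metis funpow.simps(2) o_apply)
qed

lemma chain_tracks_orbit:
  assumes "\<delta> \<le> \<eta>" "chain_from_to X f \<delta> x y k"
  shows "R y ((f ^^ k) x)"
proof -
  obtain c where "dchain X f \<delta> c k" "c 0 = x" "c k = y"
    using assms(2) unfolding chain_from_to_def by blast
  then show ?thesis
    using dchain_tracks_orbit[OF assms(1), of c k k] by simp
qed

lemma recurrent:
  assumes "y \<in> X"
  shows "\<exists>p\<ge>1. R ((f ^^ p) y) y"
proof -
  define s where "s n = (f ^^ n) y" for n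
  have s: "\<forall>n. s n \<in> X"
    using funpow_in[OF assms] unfolding s_def by simp
  obtain l r where "l \<in> X" "strict_mono (r :: nat \<Rightarrow> nat)" "(s \<circ> r) \<longlonglongrightarrow> l"
    using seq_compactE[OF compact_imp_seq_compact[OF compact] s] by blast
  then have "Cauchy (s \<circ> r)"
    by (simp add: LIMSEQ_imp_Cauchy)
  then obtain N where N: "\<And>m n. m \<ge> N \<Longrightarrow> n \<ge> N \<Longrightarrow> dist ((s \<circ> r) m) ((s \<circ> r) n) < \<eta>"
    using pos metric_CauchyD by blast
  define a b where "a = r N" and "b = r (Suc N)"
  have "a < b"
    using \<open>strict_mono r\<close> unfolding a_def b_def strict_mono_def by simp
  have "dist (s a) (s b) \<le> \<eta>"
    using N[of N "Suc N"] unfolding a_def b_def by simp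
  then have "R ((f ^^ a) y) ((f ^^ a) ((f ^^ (b - a)) y))"
    using near s \<open>a < b\<close> unfolding s_def by (simp add: funpow_apply_add)
  then have "R y ((f ^^ (b - a)) y)"
    using funpow_invariant funpow_in assms by blast
  then show ?thesis
    using \<open>a < b\<close> sym by (intro exI[of _ "b - a"]) auto
qed

lemma chain_and_cycle_if_related:
  assumes "\<epsilon> \<le> \<delta>" "R y y'"
  shows "\<exists>p. chain_from_to X f \<delta> y y' p \<and> chain_from_to X f \<delta> y y p"
proof -
  have y: "y \<in> X" "y' \<in> X"
    using related_in assms(2) by auto
  obtain p where p: "p \<ge> 1" "R ((f ^^ p) y) y"
    using recurrent[OF y(1)] by blast
  have "dist y y' \<le> \<delta>"
    using small[OF assms(2)] assms(1) by linarith
  then have "0 \<le> \<delta>"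
    using zero_le_dist order_trans by blast
  have "dist ((f ^^ p) y) y' \<le> \<delta>" "dist ((f ^^ p) y) y \<le> \<delta>"
    using small[OF trans[OF p(2) assms(2)]] small[OF p(2)] assms(1) by linarith+
  then show ?thesis
    using chain_from_to_orbit[of X f, OF maps_into y(1) _ p(1) \<open>0 \<le> \<delta>\<close>] y by blast
qed

lemma chain_equiv_if_related: "\<epsilon> \<le> \<delta> \<Longrightarrow> R y y' \<Longrightarrow> chain_equiv X f \<delta> y y'"
  unfolding chain_equiv_def using chain_and_cycle_if_related sym by meson

lemma chain_component_saturated:
  assumes "\<epsilon> \<le> \<delta>" "C \<in> chain_components X f \<delta>"
  shows "saturated X R C"
proof -
  obtain x where C: "C = {y\<in>X. chain_equiv X f \<delta> x y}"
    using assms(2) unfolding chain_components_def by blast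
  have "y' \<in> C" if "y \<in> C" "R y y'" for y y'
    using that chain_equiv_trans[OF _ chain_equiv_if_related[OF assms(1) that(2)]] related_in2
    unfolding C by blast
  then show ?thesis
    unfolding saturated_def C by blast
qed

lemma cyclic_component_saturated:
  assumes \<delta>: "\<epsilon> \<le> \<delta>" and C: "C \<in> chain_components X f \<delta>" and D: "D \<in> cyclic_components X f \<delta> C"
  shows "saturated X R D"
  unfolding saturated_def
proof (intro conjI ballI allI impI)
  show "D \<subseteq> X"
    using cyclic_components_subset[OF D] chain_components_subset[OF C] by blast
  obtain x where x: "D = {y\<in>C. \<exists>k. cycle_period X f \<delta> C dvd k \<and> chain_from_to X f \<delta> x y k}"
    using D unfolding cyclic_components_def by blast
  fix y y' assume "y \<in> D" "R y y'"
  then obtain k where y: "y \<in> C" "cycle_period X f \<delta> C dvd k" "chain_from_to X f \<delta> x y k"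
    using x by blast
  have "y' \<in> C"
    using chain_component_saturated[OF \<delta> C] y(1) \<open>R y y'\<close> unfolding saturated_def by blast
  obtain p c where p: "chain_from_to X f \<delta> y y' p" and c: "dchain X f \<delta> c p" "c 0 = y" "c p = y"
    using chain_and_cycle_if_related[OF \<delta> \<open>R y y'\<close>] unfolding chain_from_to_def by blast
  (* the cycle c through y lies in C, so its length p is a multiple of the period *)
  have "c i \<in> C" if "i \<le> p" for i
  proof -
    have "chain_equiv X f \<delta> y (c i)"
      using chain_equiv_cycle_point[OF c(1) _ that] c(2,3) by simp
    moreover have "c i \<in> X"
      using c(1) that unfolding dchain_def by blast
    ultimately show ?thesis
      using y(1) C chain_equiv_trans unfolding chain_components_def by blast
  qed
  then have "cycle_period X f \<delta> C dvd p"
    unfolding cycle_period_def using c by (intro Gcd_dvd) auto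
  then show "y' \<in> D"
    using x \<open>y' \<in> C\<close> y(2) chain_from_to_trans[OF y(3) p] by auto
qed

lemma finite_saturated: "finite {D. saturated X R D}"
proof -
  have "X \<subseteq> (\<Union>x\<in>X. ball x \<eta>)"
    using pos by auto
  then obtain T where T: "T \<subseteq> X" "finite T" "X \<subseteq> (\<Union>t\<in>T. ball t \<eta>)"
    using compactE_image[OF compact, of X "\<lambda>x. ball x \<eta>"] by blast
  have near_T: "\<exists>t\<in>T. R x t" if x: "x \<in> X" for x
  proof -
    obtain t where "t \<in> T" "dist t x < \<eta>"
      using T(3) x by auto
    then show ?thesis
      using near[of x t] T(1) x by (auto simp: dist_commute)
  qed
  (* a saturated set is determined by the points of the finite \<eta>-net T it contains *)
  have "D = {x\<in>X. \<exists>t\<in>T \<inter> D. R x t}" if "saturated X R D" for D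
    using that near_T sym unfolding saturated_def by blast
  then have "{D. saturated X R D} \<subseteq> (\<lambda>S. {x\<in>X. \<exists>t\<in>S. R x t}) ` Pow T"
    by blast
  then show ?thesis
    using T(2) finite_subset by blast
qed

lemma return_add:
  assumes "R ((f ^^ a) x) x" "R ((f ^^ b) x) x"
  shows "R ((f ^^ (a + b)) x) x"
proof -
  have "R ((f ^^ a) ((f ^^ b) x)) ((f ^^ a) x)"
    using funpow_related[OF assms(2)] .
  then show ?thesis
    using trans[OF _ assms(1)] by (simp add: funpow_apply_add)
qed

lemma return_diff:
  assumes "b \<le> a" "R ((f ^^ a) x) x" "R ((f ^^ b) x) x"
  shows "R ((f ^^ (a - b)) x) x"
proof -
  have "R ((f ^^ b) ((f ^^ (a - b)) x)) ((f ^^ b) x)"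
    using trans[OF assms(2) sym[OF assms(3)]] assms(1) by (simp add: funpow_apply_add)
  then show ?thesis
    using funpow_invariant funpow_in related_in2[OF assms(2)] by blast
qed

lemma cycle_length_return:
  assumes \<delta>: "\<delta> \<le> \<eta>" and C: "C \<in> chain_components X f \<delta>" and "x \<in> C"
    and c: "dchain X f \<delta> c j" "c 0 = c j" "\<forall>i\<le>j. c i \<in> C"
  shows "R ((f ^^ j) x) x"
proof -
  define z where "z = c 0"
  have "z \<in> C"
    using c(3) unfolding z_def by simp
  then obtain b where "chain_from_to X f \<delta> z x b"
    using chain_component_equiv[OF C] \<open>x \<in> C\<close> unfolding chain_equiv_def by blast
  then have xz: "R x ((f ^^ b) z)"
    using chain_tracks_orbit[OF \<delta>] by blast
  have "R ((f ^^ j) z) z"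
    using dchain_tracks_orbit[OF \<delta> c(1), of j] c(2) sym unfolding z_def by simp
  then have "R ((f ^^ b) ((f ^^ j) z)) ((f ^^ b) z)"
    by (rule funpow_related)
  then have "R ((f ^^ (b + j)) z) ((f ^^ b) z)"
    by (simp add: funpow_apply_add)
  moreover have "R ((f ^^ j) x) ((f ^^ (b + j)) z)"
    using funpow_related[OF xz, of j] by (simp add: funpow_apply_add add.commute)
  ultimately show ?thesis
    using trans sym[OF xz] by blast
qed

lemma return_at_period_multiples:
  assumes "\<delta> \<le> \<eta>" "C \<in> chain_components X f \<delta>" "x \<in> C" "cycle_period X f \<delta> C dvd k"
  shows "R ((f ^^ k) x) x"
proof -
  have "x \<in> X"
    using assms(2,3) chain_components_subset by blast
  let ?K = "{k. R ((f ^^ k) x) x}"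
  have "k \<in> ?K"
  proof (rule Gcd_dvd_imp_mem)
    show "0 \<in> ?K"
      using refl[OF \<open>x \<in> X\<close>] by simp
    show "a + b \<in> ?K" if "a \<in> ?K" "b \<in> ?K" for a b
      using return_add[of a x b] that by simp
    show "a - b \<in> ?K" if "a \<in> ?K" "b \<in> ?K" "b \<le> a" for a b
      using return_diff[of b a x] that by simp
    show "{k. \<exists>c. dchain X f \<delta> c k \<and> c 0 = c k \<and> (\<forall>i\<le>k. c i \<in> C)} \<subseteq> ?K"
      using cycle_length_return[OF assms(1-3)] by blast
    show "Gcd {k. \<exists>c. dchain X f \<delta> c k \<and> c 0 = c k \<and> (\<forall>i\<le>k. c i \<in> C)} dvd k"
      using assms(4) unfolding cycle_period_def .
  qed
  then show ?thesis
    by simp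
qed

lemma cyclic_component_related:
  assumes "\<delta> \<le> \<eta>" "C \<in> chain_components X f \<delta>" "D \<in> cyclic_components X f \<delta> C"
    and "y \<in> D" "y' \<in> D"
  shows "R y y'"
proof -
  obtain x where "x \<in> C"
    and x: "D = {y\<in>C. \<exists>k. cycle_period X f \<delta> C dvd k \<and> chain_from_to X f \<delta> x y k}"
    using assms(3) unfolding cyclic_components_def by blast
  have "R v x" if "v \<in> D" for v
  proof -
    have "\<exists>k. cycle_period X f \<delta> C dvd k \<and> chain_from_to X f \<delta> x v k"
      using that x by simp
    then obtain k where "cycle_period X f \<delta> C dvd k" "chain_from_to X f \<delta> x v k"
      by blast
    then show ?thesis
      using trans[OF chain_tracks_orbit[OF assms(1)] return_at_period_multiples[OF assms(1,2) \<open>x \<in> C\<close>]]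
      by blast
  qed
  then show ?thesis
    using trans[OF _ sym] assms(4,5) by blast
qed

end

section \<open>The diameters of the cyclic components\<close>

definition cyclic_diameters :: "'a::metric_space set \<Rightarrow> ('a \<Rightarrow> 'a) \<Rightarrow> real \<Rightarrow> real set" where
  "cyclic_diameters X f \<delta> =
     {diameter D | D C. C \<in> chain_components X f \<delta> \<and> D \<in> cyclic_components X f \<delta> C}"

lemma diameter_le_metric:
  fixes S :: "'a::metric_space set"
  assumes "\<And>x y. x \<in> S \<Longrightarrow> y \<in> S \<Longrightarrow> dist x y \<le> d" "0 \<le> d"
  shows "diameter S \<le> d"
  unfolding diameter_def using assms by (auto intro!: cSUP_least)

context invariant_partition
begin

lemma finite_cyclic_diameters:
  assumes "\<epsilon> \<le> \<delta>"
  shows "finite (cyclic_diameters X f \<delta>)"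
proof -
  have "cyclic_diameters X f \<delta> \<subseteq> diameter ` {D. saturated X R D}"
    unfolding cyclic_diameters_def using cyclic_component_saturated[OF assms] by blast
  then show ?thesis
    using finite_imageI[OF finite_saturated] by (rule finite_subset)
qed

lemma cyclic_diameters_nonempty:
  assumes "\<epsilon> \<le> \<delta>" "X \<noteq> {}"
  shows "cyclic_diameters X f \<delta> \<noteq> {}"
proof -
  obtain x where "x \<in> X"
    using assms(2) by blast
  define C where "C = {y\<in>X. chain_equiv X f \<delta> x y}"
  define D where "D = {y\<in>C. \<exists>k. cycle_period X f \<delta> C dvd k \<and> chain_from_to X f \<delta> x y k}"
  have C: "C \<in> chain_components X f \<delta>"
    unfolding C_def chain_components_def using \<open>x \<in> X\<close> by blast
  have "x \<in> C"
    unfolding C_def using \<open>x \<in> X\<close> chain_equiv_if_related[OF assms(1) refl] by blast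
  then have "D \<in> cyclic_components X f \<delta> C"
    unfolding D_def cyclic_components_def by blast
  then have "diameter D \<in> cyclic_diameters X f \<delta>"
    unfolding cyclic_diameters_def using C by blast
  then show ?thesis
    by blast
qed

lemma cyclic_diameters_bounds:
  assumes "\<delta> \<le> \<eta>" "v \<in> cyclic_diameters X f \<delta>"
  shows "0 \<le> v \<and> v \<le> \<epsilon>"
proof -
  obtain D C where v: "v = diameter D" and C: "C \<in> chain_components X f \<delta>"
    and D: "D \<in> cyclic_components X f \<delta> C"
    using assms(2) unfolding cyclic_diameters_def by blast
  have "D \<subseteq> X"
    using cyclic_components_subset[OF D] chain_components_subset[OF C] by (rule order_trans)
  then have "bounded D"
    by (rule bounded_subset[OF compact_imp_bounded[OF compact]])
  have "X \<noteq> {}"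
    using C unfolding chain_components_def by blast
  then have "0 \<le> \<epsilon>"
    using refl small by (metis dist_self ex_in_conv)
  then have "diameter D \<le> \<epsilon>"
    using small[OF cyclic_component_related[OF assms(1) C D]] by (rule_tac diameter_le_metric)
  then show ?thesis
    using v diameter_ge_0[OF \<open>bounded D\<close>] by simp
qed

end

lemma r_fun_mem_cyclic_diameters:
  assumes "compact X" "zero_dim X" "homeomorphism X X f g" "equicontinuous X f" "0 < \<delta>"
  shows "r_fun X f \<delta> \<in> cyclic_diameters X f \<delta>"
proof -
  obtain R \<eta> where P: "invariant_partition X f R \<delta> \<eta>"
    using ex_invariant_partition[OF assms] by blast
  have "X \<noteq> {}"
    using assms(2) unfolding zero_dim_def by blast
  have "finite (cyclic_diameters X f \<delta>)"
    using invariant_partition.finite_cyclic_diameters[OF P order_refl] .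
  moreover have "cyclic_diameters X f \<delta> \<noteq> {}"
    using invariant_partition.cyclic_diameters_nonempty[OF P order_refl \<open>X \<noteq> {}\<close>] .
  ultimately show ?thesis
    unfolding r_fun_def cyclic_diameters_def[symmetric] by (rule Max_in)
qed

theorem lemma4p2:
  fixes X :: "'a::metric_space set" and f :: "'a \<Rightarrow> 'a"
  assumes "compact X" and "zero_dim X" and "is_homeo X f" and "equicontinuous X f"
  shows "((\<lambda>\<delta>. r_fun X f \<delta>) \<longlongrightarrow> 0) (at_right 0)"
proof -
  obtain g where hom: "homeomorphism X X f g"
    using assms(3) unfolding is_homeo_def by blast
  have "eventually (\<lambda>\<delta>. dist (r_fun X f \<delta>) 0 < \<epsilon>) (at_right 0)" if \<epsilon>: "0 < \<epsilon>" for \<epsilon>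
  proof -
    obtain R \<eta> where P: "invariant_partition X f R (\<epsilon>/2) \<eta>"
      using ex_invariant_partition[OF assms(1,2) hom assms(4) half_gt_zero[OF \<epsilon>]] by blast
    have "dist (r_fun X f \<delta>) 0 < \<epsilon>" if "0 < \<delta>" "\<delta> < \<eta>" for \<delta>
    proof -
      have "0 \<le> r_fun X f \<delta> \<and> r_fun X f \<delta> \<le> \<epsilon>/2"
        using invariant_partition.cyclic_diameters_bounds[OF P less_imp_le[OF that(2)]
            r_fun_mem_cyclic_diameters[OF assms(1,2) hom assms(4) that(1)]] .
      then show ?thesis
        using \<open>0 < \<epsilon>\<close> by simp
    qed
    then show ?thesis
      unfolding eventually_at_right_field using invariant_partition.pos[OF P] by blast
  qed
  then show ?thesis
    by (simp add: tendsto_iff)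
qed

end
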